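(* Let $m,c$ be positive integers, and let $T_n$ denote the number of $(c,m)$-colored $B_n$-partitions. Let $\xi_n$ be the number of non-zero-blocks of a $(c,m)$-colored $B_n$-partition chosen uniformly at random. Then its expectation $E_n$ and variance $V_n$ satisfy \[ E_n=\frac{T_{n+1}}{mT_n}-\frac{1+c}{m},\qquad V_n=\frac{T_{n+2}}{m^2T_n}-\frac{T_{n+1}^2}{m^2T_n^2}-\frac1m . \]
   Context: Let $n,m,c$ be positive integers, let $C_1$ be a list of $c$ colors and $C_2$ a list of $m$ colors. A $(c,m)$-colored $B_n$-partition is a set partition $\pi$ of $[n]\cup\{0\}$ together with a coloring of the elements of $[n]$ defined as follows. For $x\in[n]\cup\{0\}$ let $b_x$ be the block of $\pi$ containing $x$. The block $b_0$ is called the zero-block, and every other block is a non-zero-block. Each $x\in[n]$ receives a color according to these rules: if $x=\min b_x$, then $x$ gets the first color of $C_2$; if $x\ne\min b_x$ and $x\in b_0$, then $x$ gets an arbitrary color from $C_1$; if $x\ne \min b_x$ and $x\notin b_0$, then $x$ gets an arbitrary color from $C_2$. Two such objects are equal exactly when they have the same underlying partition and the same coloring. *)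

theory Defs
  imports "HOL-Probability.Probability" "HOL-Library.Disjoint_Sets"
begin

text \<open>Colors: C1 is represented by indices {0..<c}, C2 by {0..<m}; the first color
of C2 is 0. A coloring is a function nat \<Rightarrow> nat, fixed to 0 outside [n] so that
equality of objects is equality of (partition, coloring) pairs.\<close>

definition colored_B_partitions :: "nat \<Rightarrow> nat \<Rightarrow> nat \<Rightarrow> (nat set set \<times> (nat \<Rightarrow> nat)) set" where
  "colored_B_partitions c m n =
     {(P, col). partition_on {0..n} P
        \<and> (\<forall>x. x \<notin> {1..n} \<longrightarrow> col x = 0)
        \<and> (\<forall>b\<in>P. \<forall>x\<in>b. x \<noteq> 0 \<longrightarrow>
              (if x = Min b then col x = 0
               else if 0 \<in> b then col x < c
               else col x < m))}"

definition num_nonzero_blocks :: "nat set set \<times> (nat \<Rightarrow> nat) \<Rightarrow> nat" where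
  "num_nonzero_blocks \<sigma> = card {b \<in> fst \<sigma>. 0 \<notin> b}"

definition T_count :: "nat \<Rightarrow> nat \<Rightarrow> nat \<Rightarrow> nat" where
  "T_count c m n = card (colored_B_partitions c m n)"

definition E_nzb :: "nat \<Rightarrow> nat \<Rightarrow> nat \<Rightarrow> real" where
  "E_nzb c m n = measure_pmf.expectation (pmf_of_set (colored_B_partitions c m n))
                   (\<lambda>\<sigma>. real (num_nonzero_blocks \<sigma>))"

definition V_nzb :: "nat \<Rightarrow> nat \<Rightarrow> nat \<Rightarrow> real" where
  "V_nzb c m n = measure_pmf.variance (pmf_of_set (colored_B_partitions c m n))
                   (\<lambda>\<sigma>. real (num_nonzero_blocks \<sigma>))"

end

theory Submission
  imports Defs
begin

text \<open>Deleting \<open>n + 1\<close> from a \<open>(c, m)\<close>-colored \<open>B\<^sub>n\<^sub>+\<^sub>1\<close>-partition leaves a colored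
  \<open>B\<^sub>n\<close>-partition \<open>\<sigma>\<close>, and \<open>\<sigma>\<close> has exactly \<open>c + m k + 1\<close> preimages, \<open>k\<close> being its number of
  non-zero-blocks: \<open>n + 1\<close> either forms a new singleton block (which raises \<open>k\<close> by one), or is
  added with one of \<open>c\<close> colors to the zero-block, or with one of \<open>m\<close> colors to one of the \<open>k\<close>
  non-zero-blocks (which keeps \<open>k\<close>). Hence \<open>\<Sum>\<^sub>\<tau> g (\<xi> \<tau>) = \<Sum>\<^sub>\<sigma> ((c + m \<xi> \<sigma>) g (\<xi> \<sigma>) + g (\<xi> \<sigma> + 1))\<close>
  for every \<open>g\<close>. With \<open>g = 1\<close> this expresses \<open>T\<^sub>n\<^sub>+\<^sub>1\<close> through \<open>T\<^sub>n\<close> and \<open>\<Sum> \<xi>\<close>; applied twice it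
  expresses \<open>T\<^sub>n\<^sub>+\<^sub>2\<close> through \<open>T\<^sub>n\<close>, \<open>\<Sum> \<xi>\<close> and \<open>\<Sum> \<xi>\<^sup>2\<close>; solving for the two moments gives
  \<open>E\<^sub>n\<close> and \<open>V\<^sub>n\<close>.\<close>

type_synonym colored_partition = "nat set set \<times> (nat \<Rightarrow> nat)"

lemma partition_on_block_unique:
  assumes "partition_on A P" "p \<in> P" "q \<in> P" "x \<in> p" "x \<in> q"
  shows "p = q"
  using assms by (auto simp: partition_on_def disjoint_def)

lemma partition_on_insert_singleton:
  assumes "partition_on A P" "a \<notin> A"
  shows "partition_on (insert a A) (insert {a} P)"
  using assms partition_on_insert[of "{a}" P "insert a A"] partition_onD1[OF assms(1)]
  by (auto simp: disjnt_def)

lemma partition_on_insert_into_block: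
  assumes "partition_on A P" "b \<in> P" "a \<notin> A"
  shows "partition_on (insert a A) (insert (insert a b) (P - {b}))"
proof (rule partition_onI)
  have "\<Union>P = A" using partition_onD1[OF assms(1)] by simp
  then show "\<Union>(insert (insert a b) (P - {b})) = insert a A" using assms(2) by blast
  show "{} \<notin> insert (insert a b) (P - {b})" using partition_onD3[OF assms(1)] by blast
  fix p q assume pq: "p \<in> insert (insert a b) (P - {b})" "q \<in> insert (insert a b) (P - {b})" "p \<noteq> q"
  have "a \<notin> p'" if "p' \<in> P" for p' using that assms(3) partition_onD1[OF assms(1)] by blast
  then show "disjnt p q"
    using pq assms(2) disjointD[OF partition_onD2[OF assms(1)]] by (auto simp: disjnt_def)
qed

lemma partition_on_Diff_point:
  "partition_on A Q \<Longrightarrow> partition_on (A - {a}) ((\<lambda>b. b - {a}) ` Q - {{}})"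
  by (rule partition_on_transform) (auto simp: disjnt_def)

lemma partition_on_image_Diff_point:
  assumes Q: "partition_on A Q" and B: "B \<in> Q" "a \<in> B"
  shows "(\<lambda>b. b - {a}) ` Q - {{}} = insert (B - {a}) (Q - {B}) - {{}}"
proof -
  have "b - {a} = b" if "b \<in> Q - {B}" for b
    using partition_on_block_unique[OF Q, of b B a] B that by blast
  then have "(\<lambda>b. b - {a}) ` (Q - {B}) = Q - {B}" by simp
  moreover have "Q = insert B (Q - {B})" using B(1) by blast
  ultimately have "(\<lambda>b. b - {a}) ` Q = insert (B - {a}) (Q - {B})" by (metis image_insert)
  then show ?thesis by simp
qed

lemma Min_insert_above:
  fixes a :: "'a::linorder"
  assumes "finite b" "b \<noteq> {}" "\<forall>y\<in>b. y \<le> a"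
  shows "Min (insert a b) = Min b"
  using assms by (simp add: min_absorb2)

lemma Min_Diff_above:
  fixes a :: "'a::linorder"
  assumes "finite b" "b - {a} \<noteq> {}" "\<forall>y\<in>b. y \<le> a"
  shows "Min (b - {a}) = Min b"
proof (cases "a \<in> b")
  case True
  then have "Min b = Min (insert a (b - {a}))" by (simp add: insert_absorb)
  also have "\<dots> = Min (b - {a})" using assms by (intro Min_insert_above) auto
  finally show ?thesis by simp
qed simp

definition block_colors :: "nat \<Rightarrow> nat \<Rightarrow> nat set \<Rightarrow> nat" where
  "block_colors c m b = (if 0 \<in> b then c else m)"

lemma colored_B_partitions_iff:
  "(P, col) \<in> colored_B_partitions c m n \<longleftrightarrow>
     partition_on {0..n} P \<and> (\<forall>x. x \<notin> {1..n} \<longrightarrow> col x = 0)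
     \<and> (\<forall>b\<in>P. \<forall>x\<in>b. x \<noteq> 0 \<longrightarrow> (if x = Min b then col x = 0 else col x < block_colors c m b))"
  by (simp add: colored_B_partitions_def block_colors_def) blast

lemma colored_B_partition_block:
  assumes "(P, col) \<in> colored_B_partitions c m n" "b \<in> P"
  shows "b \<subseteq> {0..n}" "b \<noteq> {}" "finite b"
proof -
  have P: "partition_on {0..n} P" using assms(1) by (simp add: colored_B_partitions_iff)
  show "b \<subseteq> {0..n}" using partition_onD1[OF P] assms(2) by blast
  then show "finite b" by (rule finite_subset) simp
  show "b \<noteq> {}" using partition_onD3[OF P] assms(2) by blast
qed

lemma colored_B_partition_color:
  assumes "(P, col) \<in> colored_B_partitions c m n" "b \<in> P" "x \<in> b" "x \<noteq> 0"
  shows "if x = Min b then col x = 0 else col x < block_colors c m b"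
  using assms unfolding colored_B_partitions_iff by blast

lemma colored_B_partition_Suc_notin:
  assumes "(P, col) \<in> colored_B_partitions c m n" "b \<in> P"
  shows "Suc n \<notin> b"
  using colored_B_partition_block(1)[OF assms] by auto

lemma colored_B_partition_finite:
  assumes "(P, col) \<in> colored_B_partitions c m n"
  shows "finite P"
  using assms by (intro finite_elements[of "{0..n}"]) (simp_all add: colored_B_partitions_iff)

lemma colored_B_partition_zero_block:
  assumes "(P, col) \<in> colored_B_partitions c m n"
  obtains B0 where "B0 \<in> P" "0 \<in> B0" "{b \<in> P. 0 \<notin> b} = P - {B0}"
proof -
  have P: "partition_on {0..n} P" using assms by (simp add: colored_B_partitions_iff)
  have "0 \<in> \<Union>P" unfolding partition_onD1[OF P, symmetric] by simp
  then obtain B0 where B0: "B0 \<in> P" "0 \<in> B0" by blast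
  moreover have "{b \<in> P. 0 \<notin> b} = P - {B0}"
    using partition_on_block_unique[OF P _ B0(1) _ B0(2)] B0 by blast
  ultimately show thesis by (rule that)
qed

fun add_singleton :: "nat \<Rightarrow> colored_partition \<Rightarrow> colored_partition" where
  "add_singleton N (P, col) = (insert {N} P, col)"

fun add_to_block :: "nat \<Rightarrow> nat set \<Rightarrow> nat \<Rightarrow> colored_partition \<Rightarrow> colored_partition" where
  "add_to_block N b j (P, col) = (insert (insert N b) (P - {b}), col(N := j))"

fun delete_point :: "nat \<Rightarrow> colored_partition \<Rightarrow> colored_partition" where
  "delete_point N (Q, col) = ((\<lambda>b. b - {N}) ` Q - {{}}, col(N := 0))"

fun extensions :: "nat \<Rightarrow> nat \<Rightarrow> nat \<Rightarrow> colored_partition \<Rightarrow> colored_partition set" where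
  "extensions c m N (P, col) =
     insert (add_singleton N (P, col))
       ((\<lambda>(b, j). add_to_block N b j (P, col)) ` (SIGMA b:P. {..<block_colors c m b}))"

lemma add_singleton_mem:
  assumes "(P, col) \<in> colored_B_partitions c m n"
  shows "add_singleton (Suc n) (P, col) \<in> colored_B_partitions c m (Suc n)"
proof -
  have "partition_on {0..n} P" using assms by (simp add: colored_B_partitions_iff)
  then have "partition_on {0..Suc n} (insert {Suc n} P)"
    using partition_on_insert_singleton[of "{0..n}" P "Suc n"] by (simp add: atLeastAtMostSuc_conv)
  then show ?thesis using assms by (auto simp: colored_B_partitions_iff)
qed

lemma add_to_block_mem:
  assumes \<sigma>: "(P, col) \<in> colored_B_partitions c m n" and b: "b \<in> P"
    and j: "j < block_colors c m b"
  shows "add_to_block (Suc n) b j (P, col) \<in> colored_B_partitions c m (Suc n)"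
proof -
  have P: "partition_on {0..n} P" using \<sigma> by (simp add: colored_B_partitions_iff)
  note new = colored_B_partition_Suc_notin[OF \<sigma>]
  have "partition_on {0..Suc n} (insert (insert (Suc n) b) (P - {b}))"
    using partition_on_insert_into_block[OF P b, of "Suc n"] by (simp add: atLeastAtMostSuc_conv)
  moreover have "Min (insert (Suc n) b) = Min b"
    using colored_B_partition_block[OF \<sigma> b] by (intro Min_insert_above) auto
  moreover have "Min b \<noteq> Suc n"
    using Min_in new[OF b] colored_B_partition_block[OF \<sigma> b] by metis
  moreover have "block_colors c m (insert (Suc n) b) = block_colors c m b"
    by (simp add: block_colors_def)
  ultimately show ?thesis using \<sigma> b j new by (auto simp: colored_B_partitions_iff)
qed

lemma delete_point_mem:
  assumes \<tau>: "(Q, col) \<in> colored_B_partitions c m (Suc n)"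
  shows "delete_point (Suc n) (Q, col) \<in> colored_B_partitions c m n"
proof -
  have Q: "partition_on {0..Suc n} Q" and col0: "\<forall>x. x \<notin> {1..Suc n} \<longrightarrow> col x = 0"
    using \<tau> by (simp_all add: colored_B_partitions_iff)
  have "partition_on {0..n} ((\<lambda>b. b - {Suc n}) ` Q - {{}})"
    using partition_on_Diff_point[OF Q, of "Suc n"] by (simp add: atLeastAtMostSuc_conv)
  moreover have "\<forall>x. x \<notin> {1..n} \<longrightarrow> (col(Suc n := 0)) x = 0"
    using col0 by (simp add: atLeastAtMostSuc_conv)
  moreover have "if x = Min b' then (col(Suc n := 0)) x = 0 else (col(Suc n := 0)) x < block_colors c m b'"
    if b': "b' \<in> (\<lambda>b. b - {Suc n}) ` Q - {{}}" and x: "x \<in> b'" "x \<noteq> 0" for b' x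
  proof -
    obtain b where b: "b \<in> Q" "b' = b - {Suc n}" using b' by auto
    have "b - {Suc n} \<noteq> {}" using b' b(2) by blast
    moreover have "\<forall>y\<in>b. y \<le> Suc n" using colored_B_partition_block(1)[OF \<tau> b(1)] by auto
    ultimately have "Min b' = Min b"
      unfolding b(2) by (rule Min_Diff_above[OF colored_B_partition_block(3)[OF \<tau> b(1)]])
    moreover have "block_colors c m b' = block_colors c m b"
      using b(2) by (simp add: block_colors_def)
    moreover have "x \<in> b" "x \<noteq> Suc n" using x b(2) by auto
    ultimately show ?thesis
      using colored_B_partition_color[OF \<tau> b(1) _ x(2)] by (simp split: if_splits)
  qed
  ultimately show ?thesis by (simp only: delete_point.simps colored_B_partitions_iff) blast
qed

lemma colored_B_partition_upd_Suc:
  assumes "(P, col) \<in> colored_B_partitions c m n"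
  shows "col(Suc n := 0) = col"
proof (rule fun_upd_idem)
  show "col (Suc n) = 0" using assms by (simp add: colored_B_partitions_iff)
qed

lemma colored_B_partition_image_Diff_Suc:
  assumes "(P, col) \<in> colored_B_partitions c m n" "P' \<subseteq> P"
  shows "(\<lambda>b. b - {Suc n}) ` P' = P'"
proof -
  have "(\<lambda>b. b - {Suc n}) ` P' = (\<lambda>b. b) ` P'"
    using colored_B_partition_Suc_notin[OF assms(1)] assms(2) by (intro image_cong) auto
  then show ?thesis by simp
qed

lemma delete_point_add_singleton:
  assumes "(P, col) \<in> colored_B_partitions c m n"
  shows "delete_point (Suc n) (add_singleton (Suc n) (P, col)) = (P, col)"
proof -
  have "(\<lambda>b. b - {Suc n}) ` insert {Suc n} P - {{}} = insert {} P - {{}}"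
    using colored_B_partition_image_Diff_Suc[OF assms subset_refl] by simp
  also have "\<dots> = P" using colored_B_partition_block(2)[OF assms] by blast
  finally show ?thesis using colored_B_partition_upd_Suc[OF assms] by simp
qed

lemma delete_point_add_to_block:
  assumes "(P, col) \<in> colored_B_partitions c m n" "b \<in> P"
  shows "delete_point (Suc n) (add_to_block (Suc n) b j (P, col)) = (P, col)"
proof -
  have "(\<lambda>b. b - {Suc n}) ` insert (insert (Suc n) b) (P - {b}) - {{}} = insert b (P - {b}) - {{}}"
    using colored_B_partition_image_Diff_Suc[OF assms(1), of "P - {b}"] colored_B_partition_Suc_notin[OF assms]
    by simp
  also have "\<dots> = P" using colored_B_partition_block(2)[OF assms(1)] assms(2) by blast
  finally show ?thesis using colored_B_partition_upd_Suc[OF assms(1)] by simp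
qed

lemma colored_B_partition_block_of_Suc:
  assumes "(Q, col) \<in> colored_B_partitions c m (Suc n)"
  obtains B where "B \<in> Q" "Suc n \<in> B"
proof -
  have Q: "partition_on {0..Suc n} Q" using assms by (simp add: colored_B_partitions_iff)
  have "Suc n \<in> \<Union>Q" unfolding partition_onD1[OF Q, symmetric] by simp
  then show thesis using that by blast
qed

lemma add_singleton_delete_point:
  assumes \<tau>: "(Q, col) \<in> colored_B_partitions c m (Suc n)" and single: "{Suc n} \<in> Q"
  shows "add_singleton (Suc n) (delete_point (Suc n) (Q, col)) = (Q, col)"
proof -
  have Q: "partition_on {0..Suc n} Q" using \<tau> by (simp add: colored_B_partitions_iff)
  have "(\<lambda>b. b - {Suc n}) ` Q - {{}} = insert ({Suc n} - {Suc n}) (Q - {{Suc n}}) - {{}}"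
    using single by (intro partition_on_image_Diff_point[OF Q]) simp_all
  also have "\<dots> = Q - {{Suc n}}" using partition_onD3[OF Q] by blast
  finally have "insert {Suc n} ((\<lambda>b. b - {Suc n}) ` Q - {{}}) = Q" using single by blast
  moreover have "col (Suc n) = 0" using colored_B_partition_color[OF \<tau> single] by simp
  then have "col(Suc n := 0) = col" by (rule fun_upd_idem)
  ultimately show ?thesis by simp
qed

lemma add_to_block_delete_point:
  assumes \<tau>: "(Q, col) \<in> colored_B_partitions c m (Suc n)"
    and B: "B \<in> Q" "Suc n \<in> B" "B \<noteq> {Suc n}"
  defines "b \<equiv> B - {Suc n}"
  shows "delete_point (Suc n) (Q, col) = (insert b (Q - {B}), col(Suc n := 0))"
    and "col (Suc n) < block_colors c m b"
    and "add_to_block (Suc n) b (col (Suc n)) (delete_point (Suc n) (Q, col)) = (Q, col)"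
proof -
  have Q: "partition_on {0..Suc n} Q" using \<tau> by (simp add: colored_B_partitions_iff)
  have b: "b \<noteq> {}" "finite b" "insert (Suc n) b = B" "Suc n \<notin> b"
    using B colored_B_partition_block(3)[OF \<tau> B(1)] by (auto simp: b_def)
  have "(\<lambda>b. b - {Suc n}) ` Q - {{}} = insert b (Q - {B}) - {{}}"
    unfolding b_def by (rule partition_on_image_Diff_point[OF Q B(1,2)])
  also have "\<dots> = insert b (Q - {B})" using partition_onD3[OF Q] b(1) by blast
  finally show delete: "delete_point (Suc n) (Q, col) = (insert b (Q - {B}), col(Suc n := 0))"
    by simp
  have "Min b = Min B"
    using b(1) colored_B_partition_block(1,3)[OF \<tau> B(1)] unfolding b_def
    by (intro Min_Diff_above) auto
  then show "col (Suc n) < block_colors c m b"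
    using colored_B_partition_color[OF \<tau> B(1,2)] Min_in[OF b(2,1)] b(4)
    by (auto simp: block_colors_def b_def)
  have "b \<notin> Q" using partition_on_block_unique[OF Q B(1)] b(1,3,4) by blast
  then have "insert B (insert b (Q - {B}) - {b}) = Q" using B(1) by auto
  then show "add_to_block (Suc n) b (col (Suc n)) (delete_point (Suc n) (Q, col)) = (Q, col)"
    unfolding delete using b(3) by simp
qed

lemma in_extensions_delete_point:
  assumes \<tau>: "(Q, col) \<in> colored_B_partitions c m (Suc n)"
  shows "(Q, col) \<in> extensions c m (Suc n) (delete_point (Suc n) (Q, col))"
proof -
  obtain B where B: "B \<in> Q" "Suc n \<in> B" using colored_B_partition_block_of_Suc[OF \<tau>] .
  show ?thesis
  proof (cases "B = {Suc n}")
    case True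
    then show ?thesis
      using add_singleton_delete_point[OF \<tau>] B(1) by (metis extensions.simps insertI1 delete_point.simps)
  next
    case False
    let ?b = "B - {Suc n}"
    note ext = add_to_block_delete_point[OF \<tau> B False]
    have "(?b, col (Suc n)) \<in> (SIGMA b':insert ?b (Q - {B}). {..<block_colors c m b'})"
      using ext(2) by simp
    moreover have "(Q, col) = (\<lambda>(b', j). add_to_block (Suc n) b' j (insert ?b (Q - {B}), col(Suc n := 0)))
        (?b, col (Suc n))"
      using ext(3) unfolding ext(1) by simp
    ultimately show ?thesis unfolding ext(1) extensions.simps by (blast intro: rev_image_eqI)
  qed
qed

lemma extensions_subset:
  assumes "(P, col) \<in> colored_B_partitions c m n"
  shows "extensions c m (Suc n) (P, col) \<subseteq> colored_B_partitions c m (Suc n)"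
  using add_singleton_mem[OF assms] add_to_block_mem[OF assms] by auto

lemma delete_point_extensions:
  assumes "(P, col) \<in> colored_B_partitions c m n" "\<tau> \<in> extensions c m (Suc n) (P, col)"
  shows "delete_point (Suc n) \<tau> = (P, col)"
  using assms(2) delete_point_add_singleton[OF assms(1)] delete_point_add_to_block[OF assms(1)]
  by auto

lemma colored_B_partitions_Suc:
  "colored_B_partitions c m (Suc n) = (\<Union>\<sigma>\<in>colored_B_partitions c m n. extensions c m (Suc n) \<sigma>)"
proof (intro equalityI subsetI)
  fix \<tau> assume \<tau>: "\<tau> \<in> colored_B_partitions c m (Suc n)"
  obtain Q col where \<tau>_eq: "\<tau> = (Q, col)" by fastforce
  have "delete_point (Suc n) (Q, col) \<in> colored_B_partitions c m n"
    and "(Q, col) \<in> extensions c m (Suc n) (delete_point (Suc n) (Q, col))"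
    using \<tau> unfolding \<tau>_eq by (rule delete_point_mem, rule in_extensions_delete_point)
  then show "\<tau> \<in> (\<Union>\<sigma>\<in>colored_B_partitions c m n. extensions c m (Suc n) \<sigma>)"
    unfolding \<tau>_eq by (rule UN_I)
next
  fix \<tau> assume "\<tau> \<in> (\<Union>\<sigma>\<in>colored_B_partitions c m n. extensions c m (Suc n) \<sigma>)"
  then obtain P col where "(P, col) \<in> colored_B_partitions c m n" "\<tau> \<in> extensions c m (Suc n) (P, col)"
    by fastforce
  then show "\<tau> \<in> colored_B_partitions c m (Suc n)" using extensions_subset by blast
qed


lemma finite_colored_B_partitions: "finite (colored_B_partitions c m n)"
proof (rule finite_subset)
  let ?colorings = "{col. \<forall>x. (x \<in> {1..n} \<longrightarrow> col x \<in> {..c + m}) \<and> (x \<notin> {1..n} \<longrightarrow> col x = 0)}"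
  show "finite ({P. partition_on {0..n} P} \<times> ?colorings)"
    by (intro finite_cartesian_product finitely_many_partition_on finite_set_of_finite_funs) simp_all
  show "colored_B_partitions c m n \<subseteq> {P. partition_on {0..n} P} \<times> ?colorings"
  proof
    fix \<tau> assume "\<tau> \<in> colored_B_partitions c m n"
    moreover obtain P col where \<tau>_eq: "\<tau> = (P, col)" by fastforce
    ultimately have \<sigma>: "(P, col) \<in> colored_B_partitions c m n" by simp
    then have P: "partition_on {0..n} P" and col0: "\<forall>x. x \<notin> {1..n} \<longrightarrow> col x = 0"
      by (simp_all add: colored_B_partitions_iff)
    have "col x \<le> c + m" if x: "x \<in> {1..n}" for x
    proof -
      have "x \<in> \<Union>P" using x unfolding partition_onD1[OF P, symmetric] by simp
      then obtain b where "b \<in> P" "x \<in> b" by blast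
      then show ?thesis using colored_B_partition_color[OF \<sigma>, of b x] x
        by (auto simp: block_colors_def split: if_splits)
    qed
    then show "\<tau> \<in> {P. partition_on {0..n} P} \<times> ?colorings" using P col0 \<tau>_eq by simp
  qed
qed

lemma num_nonzero_blocks_eq_card:
  assumes "\<sigma> \<in> colored_B_partitions c m n"
  shows "num_nonzero_blocks \<sigma> = card (fst \<sigma>) - 1"
proof -
  obtain P col where \<sigma>_eq: "\<sigma> = (P, col)" by fastforce
  obtain B0 where "B0 \<in> P" "{b \<in> P. 0 \<notin> b} = P - {B0}"
    using colored_B_partition_zero_block assms unfolding \<sigma>_eq by blast
  then show ?thesis using colored_B_partition_finite assms by (simp add: num_nonzero_blocks_def \<sigma>_eq)
qed

lemma num_nonzero_blocks_add_singleton: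
  assumes "(P, col) \<in> colored_B_partitions c m n"
  shows "num_nonzero_blocks (add_singleton (Suc n) (P, col)) = Suc (num_nonzero_blocks (P, col))"
proof -
  have "{Suc n} \<notin> P" using colored_B_partition_Suc_notin[OF assms] by blast
  moreover have "P \<noteq> {}" using colored_B_partition_zero_block[OF assms] by blast
  ultimately show ?thesis
    using num_nonzero_blocks_eq_card[OF add_singleton_mem[OF assms]] num_nonzero_blocks_eq_card[OF assms]
      colored_B_partition_finite[OF assms] by (simp add: card_gt_0_iff)
qed

lemma num_nonzero_blocks_add_to_block:
  assumes "(P, col) \<in> colored_B_partitions c m n" "b \<in> P" "j < block_colors c m b"
  shows "num_nonzero_blocks (add_to_block (Suc n) b j (P, col)) = num_nonzero_blocks (P, col)"
proof -
  have "insert (Suc n) b \<notin> P - {b}" using colored_B_partition_Suc_notin[OF assms(1)] by blast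
  then have "card (insert (insert (Suc n) b) (P - {b})) = Suc (card (P - {b}))"
    using colored_B_partition_finite[OF assms(1)] by simp
  also have "\<dots> = card P" using colored_B_partition_finite[OF assms(1)] assms(2) by (rule card_Suc_Diff1)
  finally have "card (insert (insert (Suc n) b) (P - {b})) = card P" .
  then show ?thesis
    using num_nonzero_blocks_eq_card[OF add_to_block_mem[OF assms]] num_nonzero_blocks_eq_card[OF assms(1)]
    by simp
qed

lemma sum_block_colors:
  assumes "(P, col) \<in> colored_B_partitions c m n"
  shows "(\<Sum>b\<in>P. block_colors c m b) = c + m * num_nonzero_blocks (P, col)"
proof -
  obtain B0 where B0: "B0 \<in> P" "0 \<in> B0" and nonzero: "{b \<in> P. 0 \<notin> b} = P - {B0}"
    using colored_B_partition_zero_block[OF assms] by blast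
  have "(\<Sum>b\<in>P. block_colors c m b) = block_colors c m B0 + (\<Sum>b\<in>P - {B0}. block_colors c m b)"
    using colored_B_partition_finite[OF assms] B0(1) by (rule sum.remove)
  also have "(\<Sum>b\<in>P - {B0}. block_colors c m b) = (\<Sum>b\<in>P - {B0}. m)"
    using nonzero by (intro sum.cong) (auto simp: block_colors_def)
  finally show ?thesis using B0(2) nonzero by (simp add: block_colors_def num_nonzero_blocks_def)
qed

lemma inj_on_add_to_block:
  assumes "(P, col) \<in> colored_B_partitions c m n"
  shows "inj_on (\<lambda>(b, j). add_to_block (Suc n) b j (P, col)) (SIGMA b:P. {..<block_colors c m b})"
proof (rule inj_onI)
  fix x y assume x: "x \<in> (SIGMA b:P. {..<block_colors c m b})"
    and y: "y \<in> (SIGMA b:P. {..<block_colors c m b})"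
    and eq: "(\<lambda>(b, j). add_to_block (Suc n) b j (P, col)) x
      = (\<lambda>(b, j). add_to_block (Suc n) b j (P, col)) y"
  obtain b j b' j' where xy: "x = (b, j)" "y = (b', j')" by fastforce
  have b: "b \<in> P" "b' \<in> P" using x y xy by auto
  have "insert (insert (Suc n) b) (P - {b}) = insert (insert (Suc n) b') (P - {b'})"
    and col_eq: "col(Suc n := j) = col(Suc n := j')"
    using eq xy by simp_all
  then have "insert (Suc n) b \<in> insert (insert (Suc n) b') (P - {b'})" by (metis insertI1)
  moreover have "insert (Suc n) b \<notin> P" using colored_B_partition_Suc_notin[OF assms] by blast
  ultimately have "insert (Suc n) b = insert (Suc n) b'" by blast
  then have "b = b'"
    using colored_B_partition_Suc_notin[OF assms b(1)] colored_B_partition_Suc_notin[OF assms b(2)]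
    by (metis insert_ident)
  moreover have "j = j'" using fun_cong[OF col_eq, of "Suc n"] by simp
  ultimately show "x = y" using xy by simp
qed

lemma add_singleton_notin_add_to_block:
  assumes "(P, col) \<in> colored_B_partitions c m n"
  shows "add_singleton (Suc n) (P, col)
    \<notin> (\<lambda>(b, j). add_to_block (Suc n) b j (P, col)) ` (SIGMA b:P. {..<block_colors c m b})"
proof
  assume "add_singleton (Suc n) (P, col)
    \<in> (\<lambda>(b, j). add_to_block (Suc n) b j (P, col)) ` (SIGMA b:P. {..<block_colors c m b})"
  then obtain b where b: "b \<in> P" and "insert {Suc n} P = insert (insert (Suc n) b) (P - {b})"
    by auto
  then have "{Suc n} = insert (Suc n) b \<or> {Suc n} \<in> P" by blast
  then show False
    using colored_B_partition_Suc_notin[OF assms] colored_B_partition_block(2)[OF assms b] b by blast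
qed

lemma sum_extensions:
  fixes g :: "nat \<Rightarrow> 'a::comm_semiring_1"
  assumes \<sigma>: "(P, col) \<in> colored_B_partitions c m n"
  defines "k \<equiv> num_nonzero_blocks (P, col)"
  shows "(\<Sum>\<tau>\<in>extensions c m (Suc n) (P, col). g (num_nonzero_blocks \<tau>)) = of_nat (c + m * k) * g k + g (Suc k)"
proof -
  let ?S = "SIGMA b:P. {..<block_colors c m b}"
  let ?add = "\<lambda>(b, j). add_to_block (Suc n) b j (P, col)"
  have "finite (?add ` ?S)" using colored_B_partition_finite[OF \<sigma>] by blast
  then have "(\<Sum>\<tau>\<in>extensions c m (Suc n) (P, col). g (num_nonzero_blocks \<tau>))
      = g (num_nonzero_blocks (add_singleton (Suc n) (P, col))) + (\<Sum>\<tau>\<in>?add ` ?S. g (num_nonzero_blocks \<tau>))"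
    unfolding extensions.simps using add_singleton_notin_add_to_block[OF \<sigma>] by (rule sum.insert)
  also have "(\<Sum>\<tau>\<in>?add ` ?S. g (num_nonzero_blocks \<tau>)) = (\<Sum>x\<in>?S. g (num_nonzero_blocks (?add x)))"
    by (rule sum.reindex[OF inj_on_add_to_block[OF \<sigma>], unfolded comp_def])
  also have "\<dots> = (\<Sum>x\<in>?S. g k)"
    using num_nonzero_blocks_add_to_block[OF \<sigma>] by (intro sum.cong) (auto simp: k_def)
  also have "\<dots> = of_nat (c + m * k) * g k"
    using colored_B_partition_finite[OF \<sigma>] sum_block_colors[OF \<sigma>] by (simp add: card_SigmaI k_def)
  finally show ?thesis
    using num_nonzero_blocks_add_singleton[OF \<sigma>] by (simp add: k_def add.commute)
qed

lemma sum_colored_B_partitions_Suc: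
  fixes g :: "nat \<Rightarrow> 'a::comm_semiring_1"
  shows "(\<Sum>\<tau>\<in>colored_B_partitions c m (Suc n). g (num_nonzero_blocks \<tau>))
    = (\<Sum>\<sigma>\<in>colored_B_partitions c m n.
         of_nat (c + m * num_nonzero_blocks \<sigma>) * g (num_nonzero_blocks \<sigma>) + g (Suc (num_nonzero_blocks \<sigma>)))"
proof -
  have "finite (extensions c m (Suc n) \<sigma>)" if "\<sigma> \<in> colored_B_partitions c m n" for \<sigma>
    using that extensions_subset finite_colored_B_partitions
    by (metis finite_subset surj_pair)
  moreover have "extensions c m (Suc n) \<sigma> \<inter> extensions c m (Suc n) \<sigma>' = {}"
    if "\<sigma> \<in> colored_B_partitions c m n" "\<sigma>' \<in> colored_B_partitions c m n" "\<sigma> \<noteq> \<sigma>'" for \<sigma> \<sigma>'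
    using that delete_point_extensions by (metis disjoint_iff surj_pair)
  ultimately have "(\<Sum>\<tau>\<in>colored_B_partitions c m (Suc n). g (num_nonzero_blocks \<tau>))
      = (\<Sum>\<sigma>\<in>colored_B_partitions c m n. \<Sum>\<tau>\<in>extensions c m (Suc n) \<sigma>. g (num_nonzero_blocks \<tau>))"
    unfolding colored_B_partitions_Suc by (intro sum.UNION_disjoint finite_colored_B_partitions) blast+
  also have "\<dots> = (\<Sum>\<sigma>\<in>colored_B_partitions c m n.
         of_nat (c + m * num_nonzero_blocks \<sigma>) * g (num_nonzero_blocks \<sigma>) + g (Suc (num_nonzero_blocks \<sigma>)))"
    using sum_extensions by (intro sum.cong) (auto simp: split_paired_all)
  finally show ?thesis .
qed

lemma singletons_in_colored_B_partitions:
  "((\<lambda>x. {x}) ` {0..n}, \<lambda>_. 0) \<in> colored_B_partitions c m n"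
  by (auto simp: colored_B_partitions_iff partition_on_singletons)

lemma T_count_Suc_eq_sum:
  "T_count c m (Suc n) = (\<Sum>\<sigma>\<in>colored_B_partitions c m n. Suc (c + m * num_nonzero_blocks \<sigma>))"
  using sum_colored_B_partitions_Suc[where g = "\<lambda>_. 1 :: nat"] by (simp add: T_count_def)

lemma T_count_Suc:
  "T_count c m (Suc n) = (c + 1) * T_count c m n + m * (\<Sum>\<sigma>\<in>colored_B_partitions c m n. num_nonzero_blocks \<sigma>)"
  unfolding T_count_Suc_eq_sum by (simp add: sum_Suc sum.distrib sum_distrib_left T_count_def)

lemma T_count_Suc_Suc:
  "T_count c m (Suc (Suc n)) = ((c + 1)\<^sup>2 + m) * T_count c m n
     + 2 * (c + 1) * m * (\<Sum>\<sigma>\<in>colored_B_partitions c m n. num_nonzero_blocks \<sigma>)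
     + m\<^sup>2 * (\<Sum>\<sigma>\<in>colored_B_partitions c m n. (num_nonzero_blocks \<sigma>)\<^sup>2)"
proof -
  have "T_count c m (Suc (Suc n)) = (\<Sum>\<sigma>\<in>colored_B_partitions c m n.
      (c + m * num_nonzero_blocks \<sigma>) * Suc (c + m * num_nonzero_blocks \<sigma>)
      + Suc (c + m * Suc (num_nonzero_blocks \<sigma>)))"
    unfolding T_count_Suc_eq_sum using sum_colored_B_partitions_Suc[where g = "\<lambda>k. Suc (c + m * k)"] by simp
  also have "\<dots> = (\<Sum>\<sigma>\<in>colored_B_partitions c m n.
      ((c + 1)\<^sup>2 + m) + 2 * (c + 1) * m * num_nonzero_blocks \<sigma> + m\<^sup>2 * (num_nonzero_blocks \<sigma>)\<^sup>2)"
    by (intro sum.cong) (simp_all add: algebra_simps power2_eq_square)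
  finally show ?thesis by (simp add: sum.distrib sum_distrib_left T_count_def)
qed

lemma variance_pmf_of_set:
  fixes X :: "'a \<Rightarrow> real"
  assumes "finite S" "S \<noteq> {}"
  shows "measure_pmf.variance (pmf_of_set S) X = (\<Sum>x\<in>S. (X x)\<^sup>2) / card S - ((\<Sum>x\<in>S. X x) / card S)\<^sup>2"
proof -
  have integrable: "integrable (measure_pmf (pmf_of_set S)) f" for f :: "'a \<Rightarrow> real"
    using assms by (intro integrable_measure_pmf_finite) simp
  have "measure_pmf.variance (pmf_of_set S) X
      = measure_pmf.expectation (pmf_of_set S) (\<lambda>x. (X x)\<^sup>2) - (measure_pmf.expectation (pmf_of_set S) X)\<^sup>2"
    by (rule measure_pmf.variance_eq) (rule integrable)+
  then show ?thesis by (simp add: integral_pmf_of_set[OF assms(2,1)])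
qed

theorem theorem3:
  fixes m c n :: nat
  assumes "m > 0" and "c > 0" and "n > 0"
  shows "E_nzb c m n = real (T_count c m (n+1)) / (real m * real (T_count c m n)) - (1 + real c) / real m
     \<and> V_nzb c m n = real (T_count c m (n+2)) / ((real m)^2 * real (T_count c m n))
                    - (real (T_count c m (n+1)))^2 / ((real m)^2 * (real (T_count c m n))^2)
                    - 1 / real m"
proof -
  let ?S = "colored_B_partitions c m n"
  define T where "T = real (T_count c m n)"
  define A where "A = (\<Sum>\<sigma>\<in>?S. real (num_nonzero_blocks \<sigma>))"
  define B where "B = (\<Sum>\<sigma>\<in>?S. (real (num_nonzero_blocks \<sigma>))\<^sup>2)"
  have S: "finite ?S" "?S \<noteq> {}"
    using finite_colored_B_partitions singletons_in_colored_B_partitions by blast+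
  then have "T > 0" by (simp add: T_def T_count_def card_gt_0_iff)
  have E: "E_nzb c m n = A / T"
    using S by (simp add: E_nzb_def integral_pmf_of_set A_def T_def T_count_def)
  have V: "V_nzb c m n = B / T - (A / T)\<^sup>2"
    using S by (simp add: V_nzb_def variance_pmf_of_set A_def B_def T_def T_count_def)
  have T1: "real (T_count c m (n+1)) = (real c + 1) * T + real m * A"
    using T_count_Suc[of c m n] by (simp add: A_def T_def algebra_simps)
  have T2: "real (T_count c m (n+2))
      = ((real c + 1)\<^sup>2 + real m) * T + 2 * (real c + 1) * real m * A + (real m)\<^sup>2 * B"
    using T_count_Suc_Suc[of c m n] by (simp add: A_def B_def T_def algebra_simps)
  show ?thesis
    using \<open>T > 0\<close> \<open>m > 0\<close> unfolding E V T1 T2 T_def[symmetric] by (simp add: field_simps power2_eq_square)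
qed

end
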